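(* Let $U\subset\mathbb R^m$ be open and assume (A1), (A2)–(A3) for all $u\in U$ and all unit $d$, (A4) at every $u\in U$, and condition (B) at every $u\in U$. Let $u_0\in U$ and $x_0\in S(u_0)$. Then the function $w:U\to\mathbb R$, $w(u)=f(x_0,u)$, is a viscosity subsolution at $u_0$ of $-\nabla w(u)\cdot d+\inf_{x\in S(u)}D_df_x(u)=0$ for every unit $d\in\mathbb R^m$, i.e. $-\eta\cdot d+\inf_{x\in S(u_0)}D_df_x(u_0)\le0$ for every $\eta\in\mathcal J^+w(u_0)$.
   Context: $\mathfrak X$ real Banach space, $X\subset\mathfrak X$ nonempty, $f:X\times U\to\mathbb R$, $\Phi:U\to2^X$, $v(u)=\inf_{x\in\Phi(u)}f(x,u)$, $S(u)=\{x\in\Phi(u):f(x,u)=v(u)\}$, $f_x(u)=f(x,u)$, $D_df_x(u)=\lim_{s\downarrow0}\frac{f(x,u+sd)-f(x,u)}{s}$. $\mathcal J^+w(u_0)=\{p\in\mathbb R^m:\limsup_{u\to u_0}\frac{w(u)-w(u_0)-p\cdot(u-u_0)}{|u-u_0|}\le0\}$. (A1): $f$ continuous and for each $u$ there exist $\alpha$, compact $C$ with $\emptyset\ne\{x\in\Phi(u'):f(x,u')\le\alpha\}\subset C$ for $u'$ near $u$. (A2) at $u$, $d$: $D_df_x(u)$ exists for $x\in\Phi(u)$ and $\inf_{x\in S(u)}D_df_x(u)>-\infty$. (A3) at $u$, $d$: $\{x_k\}\subset\Phi(u)$, $x_k\to x$ implies $D_df_x(u)\le\limsup_kD_df_{x_k}(u)$.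 (A4) at $u$: there exist $C_0>0$ and a neighborhood $\mathcal N$ of $u$ with $\inf_{x\in S(u_1)}D_df_x(u_1)>-C_0$ for $u_1\in\mathcal N$ and unit $d$. Condition (B): $\Phi$ constant equal to a nonempty closed subset of $X$, or $\Phi(u)=\{x\in X:G(x,u)\in K\}$ with $G$ continuous into a topological vector space, $K$ closed with nonempty interior, and $G(x,u)\in\operatorname{int}K$ for $x\in S(u)$. *)

theory Defs
  imports "HOL-Analysis.Analysis" "HOL-Library.Extended_Real"
begin

class real_tvs = real_vector + topological_space +
  assumes tvs_add_cont: "((\<lambda>p::'a \<times> 'a. fst p + snd p) \<longlongrightarrow> a + b) (nhds a \<times>\<^sub>F nhds b)"
  assumes tvs_scaleR_cont: "((\<lambda>p::real \<times> 'a. fst p *\<^sub>R snd p) \<longlongrightarrow> c *\<^sub>R a) (nhds c \<times>\<^sub>F nhds a)"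

definition optval :: "('x \<Rightarrow> 'u \<Rightarrow> real) \<Rightarrow> ('u \<Rightarrow> 'x set) \<Rightarrow> 'u \<Rightarrow> ereal" where
  "optval f \<Phi> u = (INF x\<in>\<Phi> u. ereal (f x u))"

definition optsol :: "('x \<Rightarrow> 'u \<Rightarrow> real) \<Rightarrow> ('u \<Rightarrow> 'x set) \<Rightarrow> 'u \<Rightarrow> 'x set" where
  "optsol f \<Phi> u = {x\<in>\<Phi> u. ereal (f x u) = optval f \<Phi> u}"

definition dquot :: "('x \<Rightarrow> 'u::real_normed_vector \<Rightarrow> real) \<Rightarrow> 'x \<Rightarrow> 'u \<Rightarrow> 'u \<Rightarrow> real \<Rightarrow> real" where
  "dquot f x u d s = (f x (u + s *\<^sub>R d) - f x u) / s"

definition dderiv_exists :: "('x \<Rightarrow> 'u::real_normed_vector \<Rightarrow> real) \<Rightarrow> 'x \<Rightarrow> 'u \<Rightarrow> 'u \<Rightarrow> bool" where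
  "dderiv_exists f x u d \<longleftrightarrow> (\<exists>L. (dquot f x u d \<longlongrightarrow> L) (at_right 0))"

definition dderiv :: "('x \<Rightarrow> 'u::real_normed_vector \<Rightarrow> real) \<Rightarrow> 'x \<Rightarrow> 'u \<Rightarrow> 'u \<Rightarrow> real" where
  "dderiv f x u d = Lim (at_right 0) (dquot f x u d)"

definition superdiff :: "(real^'m \<Rightarrow> real) \<Rightarrow> (real^'m) set \<Rightarrow> real^'m \<Rightarrow> (real^'m) set" where
  "superdiff w U u0 = {p. Limsup (at u0 within U)
      (\<lambda>u. ereal ((w u - w u0 - p \<bullet> (u - u0)) / norm (u - u0))) \<le> 0}"

end

theory Submission
  imports Defs
begin

text \<open>Only the subsolution inequality is at stake, so no stability of the optimal set is needed:
the infimum over \<open>S(u\<^sub>0)\<close> is at most the directional derivative of \<open>f\<^sub>x\<^sub>0\<close>, and along the ray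
\<open>u\<^sub>0 + s d\<close>, \<open>s \<down> 0\<close>, the superdifferential inequality bounds the difference quotients of
\<open>f\<^sub>x\<^sub>0\<close> by \<open>\<eta> \<bullet> d + \<epsilon>\<close> for every \<open>\<epsilon> > 0\<close>.\<close>

lemma dderiv_eqI:
  assumes "(dquot f x u d \<longlongrightarrow> L) (at_right 0)"
  shows "dderiv f x u d = L"
  unfolding dderiv_def by (rule tendsto_Lim[OF _ assms]) simp

lemma filterlim_ray_at_within:
  fixes u0 d :: "'a::real_normed_vector"
  assumes "open U" "u0 \<in> U" "d \<noteq> 0"
  shows "filterlim (\<lambda>s::real. u0 + s *\<^sub>R d) (at u0 within U) (at_right 0)"
proof -
  have lim: "((\<lambda>s::real. u0 + s *\<^sub>R d) \<longlongrightarrow> u0) (at_right 0)"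
    by (rule tendsto_eq_intros refl)+ simp
  have "eventually (\<lambda>s::real. u0 + s *\<^sub>R d \<in> U) (at_right 0)"
    using topological_tendstoD[OF lim assms(1,2)] .
  moreover have "eventually (\<lambda>s::real. u0 + s *\<^sub>R d \<noteq> u0) (at_right 0)"
    using eventually_at_right_less[of "0::real"] by eventually_elim (use assms(3) in simp)
  ultimately show ?thesis
    unfolding filterlim_at using lim by (auto elim: eventually_conj)
qed

lemma superdiff_eventually_quotient_le:
  fixes w :: "real^'m \<Rightarrow> real"
  assumes "open U" "u0 \<in> U" "norm d = 1" "\<eta> \<in> superdiff w U u0" "e > 0"
  shows "eventually (\<lambda>s. (w (u0 + s *\<^sub>R d) - w u0) / s \<le> \<eta> \<bullet> d + e) (at_right 0)"
proof -
  define g where "g u = ereal ((w u - w u0 - \<eta> \<bullet> (u - u0)) / norm (u - u0))" for u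
  have "Limsup (at u0 within U) g \<le> 0"
    using assms(4) unfolding superdiff_def g_def by simp
  then have "eventually (\<lambda>u. g u < ereal e) (at u0 within U)"
    by (rule Limsup_lessD[OF le_less_trans]) (use assms(5) in simp)
  moreover have "filterlim (\<lambda>s. u0 + s *\<^sub>R d) (at u0 within U) (at_right 0)"
    using assms(1-3) by (intro filterlim_ray_at_within) auto
  ultimately have "eventually (\<lambda>s. g (u0 + s *\<^sub>R d) < ereal e) (at_right 0)"
    by (rule eventually_compose_filterlim)
  then show ?thesis
    using eventually_at_right_less[of "0::real"]
  proof eventually_elim
    case (elim s)
    then have "g (u0 + s *\<^sub>R d) = ereal ((w (u0 + s *\<^sub>R d) - w u0) / s - \<eta> \<bullet> d)"
      using assms(3) by (simp add: g_def diff_divide_distrib)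
    then show ?case using elim(1) by simp
  qed
qed

lemma superdiff_directional_limit_le:
  fixes w :: "real^'m \<Rightarrow> real"
  assumes "open U" "u0 \<in> U" "norm d = 1" "\<eta> \<in> superdiff w U u0"
    and lim: "((\<lambda>s. (w (u0 + s *\<^sub>R d) - w u0) / s) \<longlongrightarrow> L) (at_right 0)"
  shows "L \<le> \<eta> \<bullet> d"
proof (rule field_le_epsilon)
  fix e :: real assume "e > 0"
  with assms(1-4) show "L \<le> \<eta> \<bullet> d + e"
    by (intro tendsto_upperbound[OF lim] superdiff_eventually_quotient_le) simp_all
qed

theorem mainTheorem9:
  fixes X :: "'x::banach set"
    and U :: "(real^'m) set"
    and f :: "'x \<Rightarrow> real^'m \<Rightarrow> real"
    and \<Phi> :: "real^'m \<Rightarrow> 'x set"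
    and u0 :: "real^'m" and x0 :: 'x
  assumes X_ne: "X \<noteq> {}"
    and U_open: "open U"
    and Phi_sub: "\<forall>u\<in>U. \<Phi> u \<subseteq> X"
    \<comment> \<open>(A1)\<close>
    and A1_cont: "continuous_on (X \<times> U) (\<lambda>(x, u). f x u)"
    and A1_comp: "\<forall>u\<in>U. \<exists>\<alpha> C N. compact C \<and> open N \<and> u \<in> N \<and>
                    (\<forall>u'\<in>N \<inter> U. {x\<in>\<Phi> u'. f x u' \<le> \<alpha>} \<noteq> {} \<and> {x\<in>\<Phi> u'. f x u' \<le> \<alpha>} \<subseteq> C)"
    \<comment> \<open>(A2) for all u in U and unit d\<close>
    and A2: "\<forall>u\<in>U. \<forall>d. norm d = 1 \<longrightarrow>
               (\<forall>x\<in>\<Phi> u. dderiv_exists f x u d) \<and>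
               (INF x\<in>optsol f \<Phi> u. ereal (dderiv f x u d)) > -\<infinity>"
    \<comment> \<open>(A3) for all u in U and unit d\<close>
    and A3: "\<forall>u\<in>U. \<forall>d. norm d = 1 \<longrightarrow>
               (\<forall>xs x. (\<forall>k. xs k \<in> \<Phi> u) \<longrightarrow> x \<in> \<Phi> u \<longrightarrow> xs \<longlonglongrightarrow> x \<longrightarrow>
                  ereal (dderiv f x u d) \<le> limsup (\<lambda>k. ereal (dderiv f (xs k) u d)))"
    \<comment> \<open>(A4) at every u in U\<close>
    and A4: "\<forall>u\<in>U. \<exists>C0 N. C0 > 0 \<and> open N \<and> u \<in> N \<and> N \<subseteq> U \<and>
               (\<forall>u1\<in>N. \<forall>d. norm d = 1 \<longrightarrow>
                  (INF x\<in>optsol f \<Phi> u1. ereal (dderiv f x u1 d)) > ereal (- C0))"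
    \<comment> \<open>(B) at every u in U\<close>
    and B: "(\<exists>A. closed A \<and> A \<noteq> {} \<and> A \<subseteq> X \<and> (\<forall>u\<in>U. \<Phi> u = A)) \<or>
            (\<exists>(G :: 'x \<Rightarrow> real^'m \<Rightarrow> 'g::real_tvs) K.
               continuous_on (X \<times> U) (\<lambda>(x, u). G x u) \<and> closed K \<and> interior K \<noteq> {} \<and>
               (\<forall>u\<in>U. \<Phi> u = {x\<in>X. G x u \<in> K}) \<and>
               (\<forall>u\<in>U. \<forall>x\<in>optsol f \<Phi> u. G x u \<in> interior K))"
    and u0: "u0 \<in> U"
    and x0: "x0 \<in> optsol f \<Phi> u0"
  shows "\<forall>d::real^'m. norm d = 1 \<longrightarrow>
           (\<forall>\<eta>\<in>superdiff (\<lambda>u. f x0 u) U u0.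
              ereal (- (\<eta> \<bullet> d)) + (INF x\<in>optsol f \<Phi> u0. ereal (dderiv f x u0 d)) \<le> 0)"
proof (intro allI impI ballI)
  fix d :: "real^'m" and \<eta>
  assume d: "norm d = 1" and \<eta>: "\<eta> \<in> superdiff (\<lambda>u. f x0 u) U u0"
  have "x0 \<in> \<Phi> u0" using x0 unfolding optsol_def by simp
  then obtain L where L: "(dquot f x0 u0 d \<longlongrightarrow> L) (at_right 0)"
    using A2 u0 d unfolding dderiv_exists_def by blast
  have "L \<le> \<eta> \<bullet> d"
    using superdiff_directional_limit_le[OF U_open u0 d \<eta>] L unfolding dquot_def by blast
  then have "(INF x\<in>optsol f \<Phi> u0. ereal (dderiv f x u0 d)) \<le> ereal (\<eta> \<bullet> d)"
    using x0 dderiv_eqI[OF L] by (intro INF_lower2) auto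
  then have "ereal (- (\<eta> \<bullet> d)) + (INF x\<in>optsol f \<Phi> u0. ereal (dderiv f x u0 d))
      \<le> ereal (- (\<eta> \<bullet> d)) + ereal (\<eta> \<bullet> d)"
    by (rule add_left_mono)
  then show "ereal (- (\<eta> \<bullet> d)) + (INF x\<in>optsol f \<Phi> u0. ereal (dderiv f x u0 d)) \<le> 0"
    by (simp add: zero_ereal_def)
qed

end
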